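(* Assume $2\mu\bar c>\sigma^2 r$. There is a constant $K>0$, independent of $n$ and $i$, such that for every $n\in\mathbb N$ the solution $v_0,\dots,v_n$ of the regime-switching system satisfies $0\le u_i\le K$ on $[0,\infty)$ for $i=1,\dots,n$, where $u_i=(v_i-v_{i-1})/\Delta c$.
   Context: Constants: $\mu\in\mathbb R$, $\sigma>0$, $r>0$, $\bar c\in(0,\mu]$, $b\in[0,1]$. Operators: $\mathcal L w=\tfrac12\sigma^2w''+\mu w'-rw$, $\mathcal T w=b(1-w')+(1-b)(1-w')^+$. Regime-switching system: for $n\in\mathbb N$ let $\Delta c=\bar c/n$, $c_i=\bar c-i\Delta c$ ($i=0,\dots,n$), $v_{-1}\equiv0$; find bounded functions $v_0,\dots,v_n$ on $[0,\infty)$, $v_i\in W^2_{p,\mathrm{loc}}([0,\infty))$ for all $p>1$, with $\min\{-\mathcal Lv_i-c_i\,\mathcal Tv_i,\ v_i-v_{i-1}\}=0$ a.e. on $(0,\infty)$ and $v_i(0)=0$, for $i=0,\dots,n$ (such a solution exists and is unique). *)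

theory Defs
  imports "HOL-Analysis.Analysis"
begin

text \<open>Operator T w = b(1-w') + (1-b)(1-w')^+, as a function of b and the value of w'.\<close>
definition opT :: "real \<Rightarrow> real \<Rightarrow> real" where
  "opT b p = b * (1 - p) + (1 - b) * max (1 - p) 0"

definition opL :: "real \<Rightarrow> real \<Rightarrow> real \<Rightarrow> real \<Rightarrow> real \<Rightarrow> real \<Rightarrow> real" where
  "opL \<mu> \<sigma> r w w' w'' = \<sigma>^2 / 2 * w'' + \<mu> * w' - r * w"

text \<open>v belongs to W^2_{p,loc}([0,\<infinity>)) for every p > 1, with (weak) derivatives v' and v'':
  v is differentiable on [0,\<infinity>) with derivative v', v' is the indefinite integral of v'',
  and v'' is p-integrable on every bounded interval [0,R] for every p > 1.\<close>
definition W2loc_all :: "(real \<Rightarrow> real) \<Rightarrow> (real \<Rightarrow> real) \<Rightarrow> (real \<Rightarrow> real) \<Rightarrow> bool" where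
  "W2loc_all v v' v'' \<longleftrightarrow>
     (\<forall>x\<ge>0. (v has_real_derivative v' x) (at x within {0..})) \<and>
     (\<forall>R\<ge>0. set_integrable lborel {0..R} v'' \<and>
        (\<forall>p>1. set_integrable lborel {0..R} (\<lambda>t. \<bar>v'' t\<bar> powr p))) \<and>
     (\<forall>x\<ge>0. v' x = v' 0 + (LBINT t:{0..x}. v'' t))"

text \<open>The regime-switching system for given n: v i for i = 0..n, with v_{-1} = 0,
  Delta c = cbar / n, c_i = cbar - i Delta c.\<close>
definition regime_solution ::
  "real \<Rightarrow> real \<Rightarrow> real \<Rightarrow> real \<Rightarrow> real \<Rightarrow> nat \<Rightarrow> (nat \<Rightarrow> real \<Rightarrow> real) \<Rightarrow> bool" where
  "regime_solution \<mu> \<sigma> r cbar b n v \<longleftrightarrow>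
     (\<forall>i\<le>n.
        (\<exists>B. \<forall>x\<ge>0. \<bar>v i x\<bar> \<le> B) \<and>
        v i 0 = 0 \<and>
        (\<exists>v' v''. W2loc_all (v i) v' v'' \<and>
           (AE x in lborel. x > 0 \<longrightarrow>
              min (- opL \<mu> \<sigma> r (v i x) (v' x) (v'' x)
                     - (cbar - real i * (cbar / real n)) * opT b (v' x))
                  (v i x - (if i = 0 then 0 else v (i - 1) x)) = 0)))"

end

theory Submission
  imports Defs
begin

(*
  Each v_i lies above the obstacle v_{i-1}, is a supersolution of
  sigma^2/2 v'' = r v - mu v' - c_i T v' everywhere and a solution wherever it is strictly
  above the obstacle. A maximum principle for this equation yields, by induction over i,
  the uniform bounds 0 <= v_i <= (cbar + 1)/r and, through a quadratic barrier near 0,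
  v_i x <= L x. Where v_i' >= 0 the supersolution property bounds v_i'' from above, so a
  large slope v_i' x would persist on an interval left of x and violate these bounds; hence
  v_i' <= D uniformly. Finally w = v_i - v_{i-1} satisfies, where it is positive, a linear
  inequality with source term (c_{i-1} - c_i) T(v_{i-1}') >= - Delta c * D, and the maximum
  principle gives w <= Delta c * D / r.
*)

definition W21_loc :: "(real \<Rightarrow> real) \<Rightarrow> (real \<Rightarrow> real) \<Rightarrow> (real \<Rightarrow> real) \<Rightarrow> bool" where
  "W21_loc v v' v'' \<longleftrightarrow>
     (\<forall>x\<ge>0. (v has_real_derivative v' x) (at x within {0..})) \<and>
     (\<forall>R\<ge>0. set_integrable lborel {0..R} v'') \<and>
     (\<forall>x\<ge>0. v' x = v' 0 + (LBINT t:{0..x}. v'' t))"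

lemma W21_locD:
  assumes "W21_loc v v' v''" "0 \<le> x"
  shows "(v has_real_derivative v' x) (at x within {0..})"
    and "set_integrable lborel {0..x} v''"
    and "v' x = v' 0 + (LBINT t:{0..x}. v'' t)"
  using assms unfolding W21_loc_def by blast+

lemma W2loc_all_imp_W21_loc: "W2loc_all v v' v'' \<Longrightarrow> W21_loc v v' v''"
  unfolding W2loc_all_def W21_loc_def by blast

lemma W21_loc_has_real_derivative_at:
  assumes "W21_loc v v' v''" "x > 0"
  shows "(v has_real_derivative v' x) (at x)"
proof -
  have "at x within {0..} = at x"
    using assms(2) by (intro at_within_interior) (simp add: interior_Ici[of "-1"])
  then show ?thesis using W21_locD(1)[OF assms(1), of x] assms(2) by simp
qed

lemma W21_loc_continuous_on: "W21_loc v v' v'' \<Longrightarrow> continuous_on {0..} v"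
  by (rule DERIV_continuous_on[of _ _ v']) (auto dest: W21_locD(1))

lemma W21_loc_deriv_continuous_on:
  assumes W: "W21_loc v v' v''" and "R \<ge> 0"
  shows "continuous_on {0..R} v'"
proof -
  have int: "set_integrable lborel {0..R} v''" using W21_locD(2)[OF W assms(2)] .
  have eq: "v' x = v' 0 + integral {0..x} v''" if "x \<in> {0..R}" for x
  proof -
    have "set_integrable lborel {0..x} v''"
      by (rule set_integrable_subset[OF int]) (use that in auto)
    then show ?thesis
      using W21_locD(3)[OF W, of x] that by (simp add: set_borel_integral_eq_integral(2))
  qed
  have "continuous_on {0..R} (\<lambda>x. v' 0 + integral {0..x} v'')"
    using set_borel_integral_eq_integral(1)[OF int]
    by (intro continuous_on_add continuous_on_const indefinite_integral_continuous_1)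
  then show ?thesis by (rule continuous_on_eq) (rule eq[symmetric])
qed

lemma W21_loc_deriv_increment:
  assumes W: "W21_loc v v' v''" and "0 \<le> x" "x \<le> y"
  shows "set_integrable lborel {x<..y} v''" "v' y - v' x = (LBINT t:{x<..y}. v'' t)"
proof -
  have int: "set_integrable lborel {0..y} v''" using W21_locD(2)[OF W] assms by simp
  have int_x: "set_integrable lborel {0..x} v''"
    by (rule set_integrable_subset[OF int]) (use assms in auto)
  show int_xy: "set_integrable lborel {x<..y} v''"
    by (rule set_integrable_subset[OF int]) (use assms in auto)
  have split: "{0..y} = {0..x} \<union> {x<..y}" using assms by auto
  have "(LBINT t:{0..y}. v'' t) = (LBINT t:{0..x}. v'' t) + (LBINT t:{x<..y}. v'' t)"
    unfolding split by (rule set_integral_Un[OF _ int_x int_xy]) auto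
  then show "v' y - v' x = (LBINT t:{x<..y}. v'' t)"
    using W21_locD(3)[OF W, of x] W21_locD(3)[OF W, of y] assms by simp
qed

lemma W21_loc_deriv_increment_le:
  assumes W: "W21_loc v v' v''" and "0 \<le> x" "x \<le> y"
    and "AE t in lborel. x < t \<and> t \<le> y \<longrightarrow> v'' t \<le> k"
  shows "v' y - v' x \<le> k * (y - x)"
proof -
  have "(LBINT t:{x<..y}. v'' t) \<le> (LBINT t:{x<..y}. k)"
    using W21_loc_deriv_increment(1)[OF assms(1-3)] assms(4)
    by (intro set_integral_mono_AE)
       (auto simp: set_integrable_def assms(3) intro!: integrable_real_indicator elim!: eventually_mono)
  moreover have "(LBINT t:{x<..y}. k) = k * (y - x)"
    using assms(3) by (simp add: set_integral_const)
  ultimately show ?thesis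
    using W21_loc_deriv_increment(2)[OF assms(1-3)] by linarith
qed

lemma W21_loc_deriv_increment_ge:
  assumes W: "W21_loc v v' v''" and "0 \<le> x" "x \<le> y"
    and "AE t in lborel. x < t \<and> t \<le> y \<longrightarrow> k \<le> v'' t"
  shows "k * (y - x) \<le> v' y - v' x"
proof -
  have "(LBINT t:{x<..y}. k) \<le> (LBINT t:{x<..y}. v'' t)"
    using W21_loc_deriv_increment(1)[OF assms(1-3)] assms(4)
    by (intro set_integral_mono_AE)
       (auto simp: set_integrable_def assms(3) intro!: integrable_real_indicator elim!: eventually_mono)
  moreover have "(LBINT t:{x<..y}. k) = k * (y - x)"
    using assms(3) by (simp add: set_integral_const)
  ultimately show ?thesis
    using W21_loc_deriv_increment(2)[OF assms(1-3)] by linarith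
qed

lemma W21_loc_diff:
  assumes v: "W21_loc v v' v''" and w: "W21_loc w w' w''"
  shows "W21_loc (\<lambda>x. v x - w x) (\<lambda>x. v' x - w' x) (\<lambda>x. v'' x - w'' x)"
  unfolding W21_loc_def
proof (intro conjI allI impI)
  fix x :: real assume x: "x \<ge> 0"
  show "((\<lambda>x. v x - w x) has_real_derivative v' x - w' x) (at x within {0..})"
    using W21_locD(1)[OF v x] W21_locD(1)[OF w x] by (rule DERIV_diff)
  show "set_integrable lborel {0..x} (\<lambda>x. v'' x - w'' x)"
    using W21_locD(2)[OF v x] W21_locD(2)[OF w x] by (rule set_integral_diff(1))
  have "(LBINT t:{0..x}. v'' t - w'' t) = (LBINT t:{0..x}. v'' t) - (LBINT t:{0..x}. w'' t)"
    using W21_locD(2)[OF v x] W21_locD(2)[OF w x] by (rule set_integral_diff(2))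
  then show "v' x - w' x = (v' 0 - w' 0) + (LBINT t:{0..x}. v'' t - w'' t)"
    using W21_locD(3)[OF v x] W21_locD(3)[OF w x] by linarith
qed

lemma W21_loc_quadratic:
  "W21_loc (\<lambda>x. a0 + a1 * x + a2 * x^2) (\<lambda>x. a1 + 2 * a2 * x) (\<lambda>_. 2 * a2)"
  unfolding W21_loc_def
proof (intro conjI allI impI)
  fix x :: real assume "x \<ge> 0"
  show "((\<lambda>x. a0 + a1 * x + a2 * x^2) has_real_derivative a1 + 2 * a2 * x) (at x within {0..})"
    by (auto intro!: derivative_eq_intros)
  show "set_integrable lborel {0..x} (\<lambda>_. 2 * a2)"
    by (simp add: set_integrable_def emeasure_lborel_Icc_eq)
  show "a1 + 2 * a2 * x = (a1 + 2 * a2 * 0) + (LBINT t:{0..x}. 2 * a2)"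
    using \<open>x \<ge> 0\<close> by (simp add: set_integral_const)
qed

lemma W21_loc_increasing_from_critical_point:
  assumes W: "W21_loc z z' g" and "0 \<le> x0" "x0 < y" "z' x0 = 0" "\<kappa> > 0"
    and "AE t in lborel. x0 < t \<and> t \<le> y \<longrightarrow> \<kappa> \<le> g t"
  shows "z x0 < z y"
proof (rule DERIV_pos_imp_increasing_open[OF assms(3)])
  fix t assume t: "x0 < t" "t < y"
  have "\<kappa> * (t - x0) \<le> z' t - z' x0"
    using assms(6) by (intro W21_loc_deriv_increment_ge[OF W]) (use t assms in \<open>auto elim!: eventually_mono\<close>)
  moreover have "0 < \<kappa> * (t - x0)" using t assms(5) by simp
  ultimately have "0 < z' t" using assms(4) by simp
  then show "\<exists>d. (z has_real_derivative d) (at t) \<and> 0 < d"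
    using W21_loc_has_real_derivative_at[OF W, of t] t assms(2) by auto
next
  show "continuous_on {x0..y} z"
    using W21_loc_continuous_on[OF W] by (rule continuous_on_subset) (use assms in auto)
qed

text \<open>Above M, the supersolution inequality and continuity force z'' to be positive just to
  the right of a critical point.\<close>
lemma W21_loc_increases_right_of_critical_point:
  assumes W: "W21_loc z z' g" and "s > 0" "r > 0" "C \<ge> 0" "E \<le> r * M"
    and super: "AE x in lborel. 0 < x \<and> x < R \<and> M < z x \<longrightarrow> r * z x - C * \<bar>z' x\<bar> - E \<le> s * g x"
    and x0: "0 < x0" "x0 < R" "M < z x0" "z' x0 = 0"
  shows "\<exists>y\<in>{x0<..<R}. z x0 < z y"
proof -
  define \<eta> where "\<eta> = (z x0 - M) / 2"
  define e where "e = r * \<eta> / (2 * (C + 1))"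
  have \<eta>: "0 < \<eta>" "M + \<eta> < z x0" using x0(3) by (auto simp: \<eta>_def field_simps)
  have e: "0 < e" "C * e \<le> r * \<eta> / 2"
    using \<eta> assms(3,4) by (auto simp: e_def field_simps intro!: mult_right_mono)
  have "isCont z x0" "isCont z' x0"
    using continuous_on_interior[OF W21_loc_continuous_on[OF W]]
      continuous_on_interior[OF W21_loc_deriv_continuous_on[OF W, of R]] x0 by (auto simp: interior_Ici[of "-1"])
  then have "\<forall>\<^sub>F t in at x0. M + \<eta> < z t \<and> - e < z' t \<and> z' t < e \<and> t < R"
    using \<eta>(2) e(1) x0 unfolding isCont_def
    by (intro eventually_conj order_tendstoD[OF tendsto_ident_at]) (auto intro: order_tendstoD)
  then obtain b where b: "x0 < b" "\<And>t. x0 < t \<Longrightarrow> t < b \<Longrightarrow> M + \<eta> < z t \<and> \<bar>z' t\<bar> < e \<and> t < R"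
    unfolding eventually_at_split eventually_at_right_field by fastforce
  define y where "y = (x0 + b) / 2"
  have y: "x0 < y" "y < b" using b(1) by (auto simp: y_def)
  have "AE t in lborel. x0 < t \<and> t \<le> y \<longrightarrow> r * \<eta> / (2 * s) \<le> g t"
  proof (rule eventually_mono[OF super], intro impI)
    fix t assume t: "x0 < t \<and> t \<le> y" and "0 < t \<and> t < R \<and> M < z t \<longrightarrow> r * z t - C * \<bar>z' t\<bar> - E \<le> s * g t"
    moreover have "M + \<eta> < z t" "\<bar>z' t\<bar> < e" "t < R" using b(2)[of t] t y by auto
    ultimately have "r * (M + \<eta>) - C * e - r * M \<le> s * g t"
      using x0(1) \<eta> assms(3-5) mult_left_mono[of "\<bar>z' t\<bar>" e C] by (smt (verit) mult_strict_left_mono)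
    with e(2) show "r * \<eta> / (2 * s) \<le> g t" using assms(2) by (simp add: field_simps)
  qed
  then have "z x0 < z y"
    using \<eta>(1) assms(2,3) x0(1) by (intro W21_loc_increasing_from_critical_point[OF W _ y(1) x0(4)]) auto
  moreover have "y \<in> {x0<..<R}" using b(2)[of y] y by auto
  ultimately show ?thesis by blast
qed

lemma W21_loc_maximum_principle:
  assumes W: "W21_loc z z' g" and "R > 0" "s > 0" "r > 0" "C \<ge> 0" "E \<le> r * M"
    and "z 0 \<le> M" "z R \<le> M"
    and super: "AE x in lborel. 0 < x \<and> x < R \<and> M < z x \<longrightarrow> r * z x - C * \<bar>z' x\<bar> - E \<le> s * g x"
    and x: "x \<in> {0..R}"
  shows "z x \<le> M"
proof (rule ccontr)
  assume "\<not> z x \<le> M"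
  have cont: "continuous_on {0..R} z"
    using W21_loc_continuous_on[OF W] by (rule continuous_on_subset) auto
  obtain x0 where x0: "x0 \<in> {0..R}" "\<forall>y\<in>{0..R}. z y \<le> z x0"
    using continuous_attains_sup[OF compact_Icc _ cont] \<open>R > 0\<close> by auto
  with x \<open>\<not> z x \<le> M\<close> have zx0: "M < z x0" by force
  then have x0_in: "0 < x0" "x0 < R" using x0(1) assms(7,8) by (auto simp: less_le)
  have "z' x0 = 0"
    using W21_loc_has_real_derivative_at[OF W x0_in(1)]
    by (rule DERIV_local_max[of _ _ _ "min x0 (R - x0)"]) (use x0 x0_in in \<open>auto simp: abs_if\<close>)
  then obtain y where y: "y \<in> {x0<..<R}" "z x0 < z y"
    using W21_loc_increases_right_of_critical_point[OF W assms(3-6) super x0_in zx0] by blast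
  then have "y \<in> {0..R}" using x0_in by auto
  then show False using x0(2) y(2) by fastforce
qed

text \<open>Penalising by \<open>\<epsilon> * y\<close> reduces to the bounded interval \<open>[0, R]\<close> for large R;
  then \<open>\<epsilon> \<rightarrow> 0\<close>.\<close>
lemma W21_loc_maximum_principle_Ici:
  assumes W: "W21_loc z z' g" and "s > 0" "r > 0" "C \<ge> 0" "E \<le> r * M" "z 0 \<le> M"
    and bdd: "\<forall>y\<ge>0. z y \<le> B"
    and super: "AE y in lborel. 0 < y \<and> M < z y \<longrightarrow> r * z y - C * \<bar>z' y\<bar> - E \<le> s * g y"
    and x: "0 \<le> x"
  shows "z x \<le> M"
proof (rule field_le_epsilon)
  fix e :: real assume "0 < e"
  define \<epsilon> where "\<epsilon> = e / (C / r + x + 1)"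
  have "0 \<le> C / r" using assms(3,4) by simp
  then have "0 < C / r + x + 1" using x by linarith
  then have \<epsilon>: "0 < \<epsilon>" "\<epsilon> * (C / r + x) \<le> e"
    using \<open>0 < e\<close> by (auto simp: \<epsilon>_def field_simps)
  define R where "R = max (x + 1) ((B - M) / \<epsilon>)"
  have "(B - M) / \<epsilon> \<le> R" by (simp add: R_def)
  then have "B - M \<le> R * \<epsilon>" by (simp only: pos_divide_le_eq[OF \<epsilon>(1)])
  then have R: "0 < R" "x \<le> R" "B - M \<le> \<epsilon> * R"
    using x by (auto simp: R_def mult.commute)
  have W\<epsilon>: "W21_loc (\<lambda>y. z y - \<epsilon> * y) (\<lambda>y. z' y - \<epsilon>) g"
    using W21_loc_diff[OF W W21_loc_quadratic[of 0 \<epsilon> 0]] by simp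
  have C\<epsilon>: "0 \<le> C * \<epsilon> / r" using assms(3,4) \<epsilon>(1) by simp
  have "z x - \<epsilon> * x \<le> M + C * \<epsilon> / r"
  proof (rule W21_loc_maximum_principle[OF W\<epsilon> R(1) assms(2-4), where E = "E + C * \<epsilon>"])
    show "E + C * \<epsilon> \<le> r * (M + C * \<epsilon> / r)" using assms(3,5) by (simp add: field_simps)
    show "z 0 - \<epsilon> * 0 \<le> M + C * \<epsilon> / r" using assms(6) C\<epsilon> by simp
    have "z R \<le> B" using bdd R(1) by simp
    then show "z R - \<epsilon> * R \<le> M + C * \<epsilon> / r" using R(3) C\<epsilon> by linarith
    show "x \<in> {0..R}" using x R by simp
    show "AE y in lborel. 0 < y \<and> y < R \<and> M + C * \<epsilon> / r < z y - \<epsilon> * y \<longrightarrow>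
        r * (z y - \<epsilon> * y) - C * \<bar>z' y - \<epsilon>\<bar> - (E + C * \<epsilon>) \<le> s * g y"
    proof (rule eventually_mono[OF super], intro impI)
      fix y assume y: "0 < y \<and> y < R \<and> M + C * \<epsilon> / r < z y - \<epsilon> * y"
        and "0 < y \<and> M < z y \<longrightarrow> r * z y - C * \<bar>z' y\<bar> - E \<le> s * g y"
      moreover have "0 \<le> \<epsilon> * y" using \<epsilon>(1) y by simp
      ultimately have "r * z y - C * \<bar>z' y\<bar> - E \<le> s * g y" using C\<epsilon> by auto
      moreover have "C * \<bar>z' y\<bar> \<le> C * \<bar>z' y - \<epsilon>\<bar> + C * \<epsilon>"
        using assms(4) \<epsilon>(1) mult_left_mono[of "\<bar>z' y\<bar>" "\<bar>z' y - \<epsilon>\<bar> + \<epsilon>" C]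
        by (simp add: distrib_left)
      moreover have "0 \<le> r * (\<epsilon> * y)" using assms(3) \<open>0 \<le> \<epsilon> * y\<close> by simp
      ultimately show "r * (z y - \<epsilon> * y) - C * \<bar>z' y - \<epsilon>\<bar> - (E + C * \<epsilon>) \<le> s * g y"
        by (simp add: algebra_simps)
    qed
  qed
  moreover have "\<epsilon> * (C / r + x) = C * \<epsilon> / r + \<epsilon> * x" by (simp add: algebra_simps)
  ultimately show "z x \<le> M + e" using \<epsilon>(2) by linarith
qed

lemma nonneg_if_AE_nonneg_continuous_on_Ici:
  fixes f :: "real \<Rightarrow> real"
  assumes cont: "continuous_on {0..} f" and ae: "AE x in lborel. 0 < x \<longrightarrow> 0 \<le> f x" and "0 < x"
  shows "0 \<le> f x"
proof (rule ccontr)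
  assume "\<not> 0 \<le> f x"
  have "isCont f x"
    using continuous_on_interior[OF cont] \<open>0 < x\<close> by (simp add: interior_Ici[of "-1"])
  then have "\<forall>\<^sub>F t in at x. f t < 0 \<and> 0 < t"
    using \<open>\<not> 0 \<le> f x\<close> \<open>0 < x\<close> unfolding isCont_def
    by (intro eventually_conj order_tendstoD[OF tendsto_ident_at]) (auto intro: order_tendstoD)
  then obtain d where d: "0 < d" "\<And>t. t \<noteq> x \<Longrightarrow> dist t x < d \<Longrightarrow> f t < 0 \<and> 0 < t"
    unfolding eventually_at by blast
  obtain N where N: "N \<in> null_sets lborel" "{t \<in> space lborel. \<not> (0 < t \<longrightarrow> 0 \<le> f t)} \<subseteq> N"
    using ae unfolding eventually_ae_filter by blast
  have "{x - d<..<x + d} \<subseteq> N"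
  proof
    fix t assume "t \<in> {x - d<..<x + d}"
    then have "f t < 0 \<and> 0 < t"
      using d \<open>\<not> 0 \<le> f x\<close> \<open>0 < x\<close> by (cases "t = x") (auto simp: dist_real_def)
    then show "t \<in> N" using N(2) by auto
  qed
  then have "{x - d<..<x + d} \<in> null_sets lborel"
    by (rule null_sets_subset[OF N(1), rotated]) simp
  then show False using \<open>0 < d\<close> by (simp add: null_sets_def)
qed

lemma W21_loc_deriv_pos_backward:
  assumes W: "W21_loc v v' v''" and "0 \<le> y0" "y0 \<le> x" "0 \<le> k" "k * (x - y0) < v' x"
    and curv: "AE t in lborel. y0 < t \<and> t \<le> x \<and> 0 \<le> v' t \<longrightarrow> v'' t \<le> k"
    and y: "y \<in> {y0..x}"
  shows "0 < v' y"
proof (rule ccontr)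
  assume "\<not> 0 < v' y"
  define S where "S = {y0..x} \<inter> v' -` {..0}"
  have "y \<in> S" using y \<open>\<not> 0 < v' y\<close> by (simp add: S_def)
  have "continuous_on {0..x} v'" using W21_loc_deriv_continuous_on[OF W] assms(2,3) by simp
  then have "continuous_on {y0..x} v'" by (rule continuous_on_subset) (use assms(2) in auto)
  then have "closed S" unfolding S_def by (rule continuous_closed_preimage) auto
  have "bdd_above S" unfolding S_def by (rule bdd_aboveI[of _ x]) auto
  define s0 where "s0 = Sup S"
  have "s0 \<in> S"
    unfolding s0_def using \<open>y \<in> S\<close> \<open>bdd_above S\<close> \<open>closed S\<close> by (intro closed_contains_Sup) auto
  then have s0: "y0 \<le> s0" "s0 \<le> x" "v' s0 \<le> 0" by (auto simp: S_def)
  have pos_after: "0 < v' t" if "s0 < t" "t \<le> x" for t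
  proof (rule ccontr)
    assume "\<not> 0 < v' t"
    then have "t \<in> S" using that s0 by (auto simp: S_def)
    then show False using cSup_upper[OF _ \<open>bdd_above S\<close>] that(1) by (force simp: s0_def)
  qed
  have "AE t in lborel. s0 < t \<and> t \<le> x \<longrightarrow> v'' t \<le> k"
    using curv by eventually_elim (use s0(1) pos_after in \<open>auto simp: less_imp_le\<close>)
  then have "v' x - v' s0 \<le> k * (x - s0)"
    using assms(2) s0 by (intro W21_loc_deriv_increment_le[OF W]) auto
  also have "\<dots> \<le> k * (x - y0)" using assms(4) s0(1) by (intro mult_left_mono) auto
  finally show False using assms(5) s0(3) by simp
qed

lemma W21_loc_deriv_lower_bound_backward:
  assumes W: "W21_loc v v' v''" and "0 \<le> y0" "y0 \<le> x" "0 \<le> k" "k * (x - y0) < v' x"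
    and curv: "AE t in lborel. y0 < t \<and> t \<le> x \<and> 0 \<le> v' t \<longrightarrow> v'' t \<le> k"
    and y: "y \<in> {y0..x}"
  shows "v' x - k * (x - y) \<le> v' y"
proof -
  have "AE t in lborel. y < t \<and> t \<le> x \<longrightarrow> v'' t \<le> k"
    using curv by eventually_elim
      (use y W21_loc_deriv_pos_backward[OF assms(1-6)] in \<open>auto simp: less_imp_le\<close>)
  then have "v' x - v' y \<le> k * (x - y)"
    using assms(2) y by (intro W21_loc_deriv_increment_le[OF W]) auto
  then show ?thesis by simp
qed

lemma W21_loc_increment_ge_of_deriv_ge:
  assumes W: "W21_loc v v' v''" and "0 \<le> y0" "y0 \<le> x"
    and deriv: "\<And>y. y \<in> {y0..x} \<Longrightarrow> a - k * (x - y) \<le> v' y"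
  shows "a * (x - y0) - k * (x - y0)^2 / 2 \<le> v x - v y0"
proof -
  define \<phi> where "\<phi> y = v y - a * y - k * (x - y)^2 / 2" for y
  have "\<phi> y0 \<le> \<phi> x"
  proof (rule DERIV_nonneg_imp_increasing_open[OF assms(3)])
    fix y assume y: "y0 < y" "y < x"
    have "(\<phi> has_real_derivative v' y - a + k * (x - y)) (at y)"
      unfolding \<phi>_def using W21_loc_has_real_derivative_at[OF W, of y] y assms(2)
      by (auto intro!: derivative_eq_intros simp: field_simps)
    moreover have "0 \<le> v' y - a + k * (x - y)" using deriv[of y] y by simp
    ultimately show "\<exists>d. (\<phi> has_real_derivative d) (at y) \<and> 0 \<le> d" by blast
  next
    have "continuous_on {y0..x} v"
      using W21_loc_continuous_on[OF W] by (rule continuous_on_subset) (use assms(2) in auto)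
    then show "continuous_on {y0..x} \<phi>" unfolding \<phi>_def by (intro continuous_intros) auto
  qed
  then show ?thesis by (simp add: \<phi>_def algebra_simps)
qed

lemma abs_opT_diff_le:
  assumes "0 \<le> b" "b \<le> 1"
  shows "\<bar>opT b p - opT b q\<bar> \<le> \<bar>p - q\<bar>"
proof -
  have "\<bar>max (1 - p) 0 - max (1 - q) 0\<bar> \<le> \<bar>p - q\<bar>"
    by (simp add: max_def abs_if)
  then have "\<bar>(1 - b) * (max (1 - p) 0 - max (1 - q) 0)\<bar> \<le> (1 - b) * \<bar>p - q\<bar>"
    using assms by (simp add: abs_mult mult_left_mono)
  moreover have "\<bar>b * (q - p)\<bar> = b * \<bar>p - q\<bar>"
    using assms by (simp add: abs_mult abs_minus_commute)
  moreover have "opT b p - opT b q = b * (q - p) + (1 - b) * (max (1 - p) 0 - max (1 - q) 0)"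
    unfolding opT_def by (simp add: algebra_simps)
  ultimately have "\<bar>opT b p - opT b q\<bar> \<le> b * \<bar>p - q\<bar> + (1 - b) * \<bar>p - q\<bar>"
    using abs_triangle_ineq[of "b * (q - p)" "(1 - b) * (max (1 - p) 0 - max (1 - q) 0)"]
    by linarith
  then show ?thesis by (simp add: algebra_simps)
qed

lemma opT_ge: "b \<le> 1 \<Longrightarrow> 1 - p \<le> opT b p"
  unfolding opT_def using mult_left_mono[of "1 - p" "max (1 - p) 0" "1 - b"]
  by (simp add: algebra_simps)

lemma opT_le_one:
  assumes "0 \<le> b" "b \<le> 1" "0 \<le> p"
  shows "opT b p \<le> 1"
proof -
  have "(1 - b) * max (1 - p) 0 \<le> 1 - b"
    using assms mult_left_mono[of "max (1 - p) 0" 1 "1 - b"] by simp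
  moreover have "b * (1 - p) \<le> b" using assms by (simp add: algebra_simps)
  ultimately show ?thesis unfolding opT_def by simp
qed

lemma mult_opT_le_lipschitz:
  assumes "0 \<le> b" "b \<le> 1" "0 \<le> c" "c \<le> cb"
  shows "c * opT b p \<le> c * opT b q + cb * \<bar>p - q\<bar>"
proof -
  have "c * (opT b p - opT b q) \<le> c * \<bar>p - q\<bar>"
    using abs_opT_diff_le[OF assms(1,2), of p q] assms(3) by (intro mult_left_mono) auto
  also have "\<dots> \<le> cb * \<bar>p - q\<bar>" using assms by (intro mult_right_mono) auto
  finally show ?thesis by (simp add: algebra_simps)
qed

lemma mult_opT_le_near_nonneg:
  assumes "0 \<le> b" "b \<le> 1" "0 \<le> c" "c \<le> cb" "0 \<le> q"
  shows "c * opT b p \<le> cb + cb * \<bar>p - q\<bar>"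
proof -
  have "c * opT b q \<le> cb"
  proof (cases "0 \<le> opT b q")
    case True
    then show ?thesis using opT_le_one[OF assms(1,2,5)] assms(3,4) mult_mono[of c cb "opT b q" 1] by simp
  next
    case False
    then show ?thesis using assms(3,4) mult_nonneg_nonpos[of c "opT b q"] by linarith
  qed
  then show ?thesis using mult_opT_le_lipschitz[OF assms(1-4), of p q] by simp
qed

locale regime_params =
  fixes \<mu> \<sigma> r cbar b :: real
  assumes sigma_pos: "0 < \<sigma>" and r_pos: "0 < r" and cbar_pos: "0 < cbar"
    and cbar_le_mu: "cbar \<le> \<mu>" and b_nonneg: "0 \<le> b" and b_le_one: "b \<le> 1"
begin

lemma mu_pos: "0 < \<mu>" using cbar_pos cbar_le_mu by simp

definition v_max :: real where "v_max = (cbar + 1) / r"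

lemma v_max_pos: "0 < v_max" using cbar_pos r_pos by (simp add: v_max_def)

lemma r_v_max: "r * v_max = cbar + 1" using r_pos by (simp add: v_max_def)

text \<open>The barrier \<open>\<psi> y = a0 * y - \<gamma> * y^2\<close> is a supersolution on \<open>[0, h0]\<close>: the choice
  of h0 makes \<open>\<mu> * a0 = \<sigma>^2 * \<gamma> / 2\<close>, so diffusion dominates drift
  (\<open>barrier_drift\<close>), and \<open>\<psi> h0 = \<gamma> * h0^2 \<ge> v_max\<close>.\<close>
definition h0 :: real where "h0 = \<sigma>^2 / (4 * \<mu>)"
definition \<gamma> :: real where "\<gamma> = max (v_max / h0^2) (2 * (cbar + 1) / \<sigma>^2)"
definition a0 :: real where "a0 = 2 * \<gamma> * h0"
definition slope_bound :: real where "slope_bound = max a0 (v_max / h0)"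

lemma h0_pos: "0 < h0" using sigma_pos mu_pos by (simp add: h0_def)

lemma gamma_pos: "0 < \<gamma>" using sigma_pos cbar_pos by (simp add: \<gamma>_def less_max_iff_disj)

lemma v_max_le_barrier: "v_max \<le> \<gamma> * h0^2"
proof -
  have "v_max / h0^2 \<le> \<gamma>" by (simp add: \<gamma>_def)
  then show ?thesis using h0_pos by (simp add: pos_divide_le_eq)
qed

lemma barrier_drift: "\<mu> * a0 + cbar + 1 \<le> \<sigma>^2 * \<gamma>"
proof -
  have "2 * (cbar + 1) / \<sigma>^2 \<le> \<gamma>" by (simp add: \<gamma>_def)
  then have "cbar + 1 \<le> \<sigma>^2 * \<gamma> / 2" using sigma_pos by (simp add: field_simps)
  moreover have "\<mu> * a0 = \<sigma>^2 * \<gamma> / 2" using mu_pos by (simp add: a0_def h0_def field_simps)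
  ultimately show ?thesis by simp
qed

definition curv_bound :: real where "curv_bound = 2 * r * v_max / \<sigma>^2"
definition deriv_bound :: real where "deriv_bound = max (2 * slope_bound) (2 * curv_bound * v_max + 1)"

lemma curv_bound_pos: "0 < curv_bound"
  using r_pos v_max_pos sigma_pos by (simp add: curv_bound_def)

lemma deriv_bound_ge_one: "1 \<le> deriv_bound"
  using curv_bound_pos v_max_pos by (simp add: deriv_bound_def le_max_iff_disj)

end

locale regime_system = regime_params +
  fixes n :: nat and v v' v'' :: "nat \<Rightarrow> real \<Rightarrow> real"
  assumes n_pos: "1 \<le> n"
    and bounded: "\<And>i. i \<le> n \<Longrightarrow> \<exists>B. \<forall>x\<ge>0. \<bar>v i x\<bar> \<le> B"
    and v_zero: "\<And>i. i \<le> n \<Longrightarrow> v i 0 = 0"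
    and W21: "\<And>i. i \<le> n \<Longrightarrow> W21_loc (v i) (v' i) (v'' i)"
    and variational_inequality: "\<And>i. i \<le> n \<Longrightarrow> AE x in lborel. x > 0 \<longrightarrow>
       min (- opL \<mu> \<sigma> r (v i x) (v' i x) (v'' i x) - (cbar - real i * (cbar / real n)) * opT b (v' i x))
           (v i x - (if i = 0 then 0 else v (i - 1) x)) = 0"
begin

abbreviation \<Delta> :: real where "\<Delta> \<equiv> cbar / real n"
abbreviation c :: "nat \<Rightarrow> real" where "c i \<equiv> cbar - real i * \<Delta>"
abbreviation obstacle :: "nat \<Rightarrow> real \<Rightarrow> real" where "obstacle i x \<equiv> if i = 0 then 0 else v (i - 1) x"
abbreviation H :: "nat \<Rightarrow> real \<Rightarrow> real" where
  "H i x \<equiv> r * v i x - \<mu> * v' i x - c i * opT b (v' i x)"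

lemma Delta_pos: "0 < \<Delta>" using cbar_pos n_pos by simp

lemma c_bounds: "i \<le> n \<Longrightarrow> 0 \<le> c i \<and> c i \<le> cbar"
proof -
  assume "i \<le> n"
  then have "real i * \<Delta> \<le> real n * \<Delta>" using Delta_pos by (intro mult_right_mono) auto
  then show ?thesis using cbar_pos n_pos by simp
qed

lemma c_pred: "1 \<le> i \<Longrightarrow> c (i - 1) = c i + \<Delta>"
  by (simp add: of_nat_diff left_diff_distrib diff_divide_distrib)

lemma supersolution_AE: "i \<le> n \<Longrightarrow> AE x in lborel. 0 < x \<longrightarrow> \<sigma>^2 / 2 * v'' i x \<le> H i x"
  by (erule eventually_mono[OF variational_inequality]) (auto simp: min_def opL_def split: if_splits)

lemma obstacle_AE: "i \<le> n \<Longrightarrow> AE x in lborel. 0 < x \<longrightarrow> obstacle i x \<le> v i x"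
  by (erule eventually_mono[OF variational_inequality]) (auto simp: min_def split: if_splits)

lemma continuation_AE:
  "i \<le> n \<Longrightarrow> AE x in lborel. 0 < x \<and> obstacle i x < v i x \<longrightarrow> \<sigma>^2 / 2 * v'' i x = H i x"
  by (erule eventually_mono[OF variational_inequality]) (auto simp: min_def opL_def split: if_splits)

lemma obstacle_le:
  assumes i: "i \<le> n" and "0 \<le> x"
  shows "obstacle i x \<le> v i x"
proof (cases "x = 0")
  case True
  then show ?thesis using v_zero[of i] v_zero[of "i - 1"] i by simp
next
  case False
  have "continuous_on {0..} (obstacle i)"
    using W21_loc_continuous_on[OF W21, of "i - 1"] i by (cases "i = 0") auto
  then have "continuous_on {0..} (\<lambda>x. v i x - obstacle i x)"
    using W21_loc_continuous_on[OF W21[OF i]] by (intro continuous_on_diff)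
  moreover have "AE x in lborel. 0 < x \<longrightarrow> 0 \<le> v i x - obstacle i x"
    using obstacle_AE[OF i] by eventually_elim simp
  ultimately have "0 \<le> v i x - obstacle i x"
    using False \<open>0 \<le> x\<close> by (intro nonneg_if_AE_nonneg_continuous_on_Ici) auto
  then show ?thesis by simp
qed

lemma v_nonneg: "i \<le> n \<Longrightarrow> 0 \<le> x \<Longrightarrow> 0 \<le> v i x"
proof (induction i)
  case 0
  then show ?case using obstacle_le[of 0 x] by simp
next
  case (Suc i)
  then show ?case using obstacle_le[of "Suc i" x] by simp
qed

lemma v_le_v_max_if_obstacle_le:
  assumes i: "i \<le> n" and obstacle: "\<And>y. 0 \<le> y \<Longrightarrow> obstacle i y \<le> v_max" and "0 \<le> x"
  shows "v i x \<le> v_max"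
proof -
  obtain B where B: "\<forall>y\<ge>0. \<bar>v i y\<bar> \<le> B" using bounded[OF i] by blast
  have W: "W21_loc (\<lambda>y. v i y - v_max) (v' i) (v'' i)"
    using W21_loc_diff[OF W21[OF i] W21_loc_quadratic[of v_max 0 0]] by simp
  have "v i x - v_max \<le> 0"
  proof (rule W21_loc_maximum_principle_Ici[OF W, where s = "\<sigma>^2 / 2" and C = "\<mu> + cbar" and E = "-1" and B = B])
    show "0 < \<sigma>^2 / 2" "0 < r" "0 \<le> \<mu> + cbar" "-1 \<le> r * 0" "0 \<le> x" "v i 0 - v_max \<le> 0"
      using sigma_pos r_pos mu_pos cbar_pos v_max_pos v_zero[OF i] \<open>0 \<le> x\<close> by auto
    show "\<forall>y\<ge>0. v i y - v_max \<le> B" using B v_max_pos by force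
    show "AE y in lborel. 0 < y \<and> 0 < v i y - v_max \<longrightarrow>
        r * (v i y - v_max) - (\<mu> + cbar) * \<bar>v' i y\<bar> - - 1 \<le> \<sigma>^2 / 2 * v'' i y"
      using continuation_AE[OF i]
    proof eventually_elim
      case (elim y)
      show ?case
      proof
        assume y: "0 < y \<and> 0 < v i y - v_max"
        then have "\<sigma>^2 / 2 * v'' i y = H i y" using elim obstacle[of y] by simp
        moreover have "c i * opT b (v' i y) \<le> cbar + cbar * \<bar>v' i y - 0\<bar>"
          using c_bounds[OF i] by (intro mult_opT_le_near_nonneg[OF b_nonneg b_le_one]) auto
        moreover have "\<mu> * v' i y \<le> \<mu> * \<bar>v' i y\<bar>" using mu_pos by (intro mult_left_mono) auto
        ultimately show "r * (v i y - v_max) - (\<mu> + cbar) * \<bar>v' i y\<bar> - - 1 \<le> \<sigma>^2 / 2 * v'' i y"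
          using r_v_max by (simp add: algebra_simps)
      qed
    qed
  qed
  then show ?thesis by simp
qed

lemma v_le_v_max: "i \<le> n \<Longrightarrow> 0 \<le> x \<Longrightarrow> v i x \<le> v_max"
proof (induction i arbitrary: x)
  case 0
  then show ?case using v_max_pos by (intro v_le_v_max_if_obstacle_le) auto
next
  case (Suc i)
  then show ?case by (intro v_le_v_max_if_obstacle_le) auto
qed

lemma barrier_nonneg:
  assumes "y \<in> {0..h0}"
  shows "0 \<le> a0 * y - \<gamma> * y^2"
proof -
  have "a0 * y - \<gamma> * y^2 = y * (\<gamma> * (2 * h0 - y))"
    by (simp add: a0_def power2_eq_square algebra_simps)
  then show ?thesis using assms gamma_pos by (auto intro!: mult_nonneg_nonneg)
qed

lemma barrier_supersolution:
  assumes i: "i \<le> n" and y: "y \<in> {0..h0}" and eq: "\<sigma>^2 / 2 * v'' i y = H i y"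
  shows "r * (v i y - (a0 * y - \<gamma> * y^2)) - (\<mu> + cbar) * \<bar>v' i y - (a0 - 2 * \<gamma> * y)\<bar> + 1
    \<le> \<sigma>^2 / 2 * (v'' i y + 2 * \<gamma>)"
proof -
  define q where "q = a0 - 2 * \<gamma> * y"
  have q: "0 \<le> q" "q \<le> a0"
    using y gamma_pos mult_left_mono[of y h0 "2 * \<gamma>"] by (auto simp: q_def a0_def)
  have "\<sigma>^2 / 2 * (v'' i y + 2 * \<gamma>) = H i y + \<sigma>^2 * \<gamma>" using eq by (simp add: algebra_simps)
  moreover have "c i * opT b (v' i y) \<le> cbar + cbar * \<bar>v' i y - q\<bar>"
    using c_bounds[OF i] q by (intro mult_opT_le_near_nonneg[OF b_nonneg b_le_one]) auto
  moreover have "\<mu> * v' i y \<le> \<mu> * a0 + \<mu> * \<bar>v' i y - q\<bar>"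
  proof -
    have "\<mu> * (v' i y - q) \<le> \<mu> * \<bar>v' i y - q\<bar>" "\<mu> * q \<le> \<mu> * a0"
      using mu_pos q by (auto intro!: mult_left_mono)
    then show ?thesis unfolding right_diff_distrib by linarith
  qed
  moreover have "r * (v i y - (a0 * y - \<gamma> * y^2)) \<le> r * v i y"
    using r_pos barrier_nonneg[OF y] by (simp add: right_diff_distrib)
  moreover have "(\<mu> + cbar) * \<bar>v' i y - q\<bar> = \<mu> * \<bar>v' i y - q\<bar> + cbar * \<bar>v' i y - q\<bar>"
    by (simp add: distrib_right)
  ultimately show ?thesis using barrier_drift unfolding q_def[symmetric] by linarith
qed

lemma v_le_barrier_if_obstacle_le:
  assumes i: "i \<le> n" and obstacle: "\<And>y. y \<in> {0..h0} \<Longrightarrow> obstacle i y \<le> a0 * y - \<gamma> * y^2"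
    and x: "x \<in> {0..h0}"
  shows "v i x \<le> a0 * x - \<gamma> * x^2"
proof -
  have W: "W21_loc (\<lambda>y. v i y - (a0 * y - \<gamma> * y^2)) (\<lambda>y. v' i y - (a0 - 2 * \<gamma> * y))
      (\<lambda>y. v'' i y + 2 * \<gamma>)"
    using W21_loc_diff[OF W21[OF i] W21_loc_quadratic[of 0 a0 "- \<gamma>"]] by simp
  have "v i x - (a0 * x - \<gamma> * x^2) \<le> 0"
  proof (rule W21_loc_maximum_principle[OF W h0_pos, where s = "\<sigma>^2 / 2" and C = "\<mu> + cbar" and E = "-1"])
    show "0 < \<sigma>^2 / 2" "0 < r" "0 \<le> \<mu> + cbar" "-1 \<le> r * 0" "x \<in> {0..h0}"
      "v i 0 - (a0 * 0 - \<gamma> * 0^2) \<le> 0"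
      using sigma_pos r_pos mu_pos cbar_pos v_zero[OF i] x by auto
    have "a0 * h0 - \<gamma> * h0^2 = \<gamma> * h0^2" by (simp add: a0_def power2_eq_square)
    then show "v i h0 - (a0 * h0 - \<gamma> * h0^2) \<le> 0"
      using v_le_v_max[OF i, of h0] h0_pos v_max_le_barrier by simp
    show "AE y in lborel. 0 < y \<and> y < h0 \<and> 0 < v i y - (a0 * y - \<gamma> * y^2) \<longrightarrow>
        r * (v i y - (a0 * y - \<gamma> * y^2)) - (\<mu> + cbar) * \<bar>v' i y - (a0 - 2 * \<gamma> * y)\<bar> - - 1
          \<le> \<sigma>^2 / 2 * (v'' i y + 2 * \<gamma>)"
      using continuation_AE[OF i]
    proof eventually_elim
      case (elim y)
      show ?case
      proof
        assume y: "0 < y \<and> y < h0 \<and> 0 < v i y - (a0 * y - \<gamma> * y^2)"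
        then have y_in: "y \<in> {0..h0}" by simp
        have eq: "\<sigma>^2 / 2 * v'' i y = H i y" using elim obstacle[of y] y by simp
        show "r * (v i y - (a0 * y - \<gamma> * y^2)) - (\<mu> + cbar) * \<bar>v' i y - (a0 - 2 * \<gamma> * y)\<bar> - - 1
            \<le> \<sigma>^2 / 2 * (v'' i y + 2 * \<gamma>)"
          using barrier_supersolution[OF i y_in eq] by simp
      qed
    qed
  qed
  then show ?thesis by simp
qed

lemma v_le_barrier: "i \<le> n \<Longrightarrow> x \<in> {0..h0} \<Longrightarrow> v i x \<le> a0 * x - \<gamma> * x^2"
proof (induction i arbitrary: x)
  case 0
  then show ?case using barrier_nonneg by (intro v_le_barrier_if_obstacle_le) auto
next
  case (Suc i)
  then show ?case by (intro v_le_barrier_if_obstacle_le) auto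
qed

lemma v_le_slope_bound:
  assumes i: "i \<le> n" and "0 \<le> x"
  shows "v i x \<le> slope_bound * x"
proof (cases "x \<le> h0")
  case True
  then have "v i x \<le> a0 * x - \<gamma> * x^2" using v_le_barrier[OF i, of x] \<open>0 \<le> x\<close> by simp
  also have "\<dots> \<le> a0 * x" using gamma_pos by simp
  also have "\<dots> \<le> slope_bound * x" using \<open>0 \<le> x\<close> by (intro mult_right_mono) (auto simp: slope_bound_def)
  finally show ?thesis .
next
  case False
  have "v i x \<le> v_max / h0 * h0" using v_le_v_max[OF i \<open>0 \<le> x\<close>] h0_pos by simp
  also have "\<dots> \<le> v_max / h0 * x" using False v_max_pos h0_pos by (intro mult_left_mono) auto
  also have "\<dots> \<le> slope_bound * x" using \<open>0 \<le> x\<close> by (intro mult_right_mono) (auto simp: slope_bound_def)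
  finally show ?thesis .
qed

lemma curvature_AE:
  assumes i: "i \<le> n"
  shows "AE y in lborel. 0 < y \<and> 0 \<le> v' i y \<longrightarrow> v'' i y \<le> curv_bound"
proof (rule eventually_mono[OF supersolution_AE[OF i]], intro impI)
  fix y assume "0 < y \<longrightarrow> \<sigma>^2 / 2 * v'' i y \<le> H i y" and y: "0 < y \<and> 0 \<le> v' i y"
  then have super: "\<sigma>^2 / 2 * v'' i y \<le> H i y" by simp
  have "c i * (1 - v' i y) \<le> c i * opT b (v' i y)"
    using c_bounds[OF i] opT_ge[OF b_le_one] by (intro mult_left_mono) auto
  moreover have "c i * v' i y \<le> \<mu> * v' i y"
    using c_bounds[OF i] cbar_le_mu y by (intro mult_right_mono) auto
  moreover have "r * v i y \<le> r * v_max" using v_le_v_max[OF i] y r_pos by simp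
  moreover have "c i * (1 - v' i y) = c i - c i * v' i y" by (simp only: right_diff_distrib mult_1_right)
  ultimately have "\<sigma>^2 / 2 * v'' i y \<le> r * v_max"
    using super c_bounds[OF i] by linarith
  then show "v'' i y \<le> curv_bound"
    using sigma_pos by (simp add: curv_bound_def field_simps)
qed

lemma v_increment_ge_if_deriv_large:
  assumes i: "i \<le> n" and x: "0 < x" and large: "1 < v' i x"
  defines "y0 \<equiv> max 0 (x - (v' i x - 1) / curv_bound)"
  shows "(x - y0) * (v' i x + 1) / 2 \<le> v i x - v i y0"
proof -
  define p l d where "p = v' i x" and "l = (p - 1) / curv_bound" and "d = x - y0"
  have l: "0 < l" "curv_bound * l = p - 1" using large curv_bound_pos by (auto simp: l_def p_def)
  have "d \<le> l" "0 \<le> d" using x l(1) by (auto simp: d_def y0_def l_def p_def)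
  then have d: "0 \<le> d" "curv_bound * d \<le> p - 1"
    using l(2) curv_bound_pos mult_left_mono[of d l curv_bound] by auto
  have y0: "0 \<le> y0" "y0 \<le> x" using d(1) by (auto simp: y0_def d_def)
  have "p - curv_bound * (x - y) \<le> v' i y" if "y \<in> {y0..x}" for y
    unfolding p_def
  proof (rule W21_loc_deriv_lower_bound_backward[OF W21[OF i] y0 _ _ _ that])
    show "0 \<le> curv_bound" using curv_bound_pos by simp
    show "curv_bound * (x - y0) < v' i x" using d(2) by (simp add: d_def p_def)
    show "AE t in lborel. y0 < t \<and> t \<le> x \<and> 0 \<le> v' i t \<longrightarrow> v'' i t \<le> curv_bound"
      using curvature_AE[OF i] by eventually_elim (use y0 in auto)
  qed
  then have "p * d - curv_bound * d^2 / 2 \<le> v i x - v i y0"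
    unfolding d_def by (intro W21_loc_increment_ge_of_deriv_ge[OF W21[OF i] y0])
  moreover have "curv_bound * d^2 \<le> (p - 1) * d"
    using mult_right_mono[OF d(2) d(1)] by (simp add: power2_eq_square mult.assoc)
  ultimately have "d * (p + 1) / 2 \<le> v i x - v i y0" by (simp add: field_simps)
  then show ?thesis by (simp add: d_def p_def)
qed

text \<open>If \<open>v' i x\<close> were large, the bound on v'' would keep v' large on an interval left of x,
  making v grow faster than \<open>slope_bound\<close> (short interval) or \<open>v_max\<close> (long interval) allow.\<close>
lemma v'_le_deriv_bound:
  assumes i: "i \<le> n" and x: "0 < x"
  shows "v' i x \<le> deriv_bound"
proof (rule ccontr)
  define p y0 where "p = v' i x" and "y0 = max 0 (x - (p - 1) / curv_bound)"
  assume "\<not> v' i x \<le> deriv_bound"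
  then have p: "deriv_bound < p" "1 < p" using deriv_bound_ge_one by (auto simp: p_def)
  have incr: "(x - y0) * (p + 1) / 2 \<le> v i x - v i y0"
    using v_increment_ge_if_deriv_large[OF i x] p(2) by (simp add: p_def y0_def)
  show False
  proof (cases "x \<le> (p - 1) / curv_bound")
    case True
    then have "y0 = 0" by (simp add: y0_def)
    then have "(p + 1) / 2 * x \<le> v i x" using incr v_zero[OF i] by (simp add: mult.commute)
    also have "\<dots> \<le> slope_bound * x" using v_le_slope_bound[OF i] x by simp
    finally have "(p + 1) / 2 \<le> slope_bound" using x by simp
    then show False using p(1) by (simp add: deriv_bound_def)
  next
    case False
    then have "(p - 1) / curv_bound * (p + 1) / 2 \<le> v_max"
      using incr v_le_v_max[OF i, of x] v_nonneg[OF i, of y0] x by (simp add: y0_def)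
    then have "p * p \<le> 2 * curv_bound * v_max + 1"
      using curv_bound_pos by (simp add: field_simps algebra_simps)
    moreover have "p \<le> p * p" using p(2) by simp
    ultimately show False using p(1) by (simp add: deriv_bound_def)
  qed
qed

lemma difference_supersolution_AE:
  assumes i: "1 \<le> i" "i \<le> n"
  shows "AE y in lborel. 0 < y \<and> v (i - 1) y < v i y \<longrightarrow>
    r * (v i y - v (i - 1) y) - (\<mu> + cbar) * \<bar>v' i y - v' (i - 1) y\<bar> - \<Delta> * deriv_bound
      \<le> \<sigma>^2 / 2 * (v'' i y - v'' (i - 1) y)"
proof -
  have i': "i - 1 \<le> n" using i by simp
  show ?thesis using continuation_AE[OF i(2)] supersolution_AE[OF i']
  proof eventually_elim
  case (elim y)
  show ?case
  proof
    define p1 p0 where "p1 = v' i y" and "p0 = v' (i - 1) y"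
    assume y: "0 < y \<and> v (i - 1) y < v i y"
    have "\<sigma>^2 / 2 * v'' i y = H i y" "\<sigma>^2 / 2 * v'' (i - 1) y \<le> H (i - 1) y"
      using elim y i(1) by auto
    then have "H i y - H (i - 1) y \<le> \<sigma>^2 / 2 * (v'' i y - v'' (i - 1) y)"
      unfolding right_diff_distrib by linarith
    moreover have "c i * opT b p1 \<le> c i * opT b p0 + cbar * \<bar>p1 - p0\<bar>"
      using c_bounds[OF i(2)] by (intro mult_opT_le_lipschitz[OF b_nonneg b_le_one]) auto
    moreover have "- deriv_bound \<le> opT b p0"
      using opT_ge[OF b_le_one, of p0] v'_le_deriv_bound[OF i', of y] y unfolding p0_def by linarith
    then have "\<Delta> * (- deriv_bound) \<le> \<Delta> * opT b p0" using Delta_pos by (intro mult_left_mono) auto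
    moreover have "c (i - 1) * opT b p0 = c i * opT b p0 + \<Delta> * opT b p0"
      unfolding c_pred[OF i(1)] by (rule distrib_right)
    moreover have "\<mu> * (p1 - p0) \<le> \<mu> * \<bar>p1 - p0\<bar>" using mu_pos by (intro mult_left_mono) auto
    ultimately show "r * (v i y - v (i - 1) y) - (\<mu> + cbar) * \<bar>p1 - p0\<bar> - \<Delta> * deriv_bound
        \<le> \<sigma>^2 / 2 * (v'' i y - v'' (i - 1) y)"
      unfolding p1_def p0_def right_diff_distrib distrib_right mult_minus_right by linarith
  qed
  qed
qed

lemma increment_le:
  assumes i: "1 \<le> i" "i \<le> n" and "0 \<le> x"
  shows "v i x - v (i - 1) x \<le> \<Delta> * deriv_bound / r"
proof -
  have i': "i - 1 \<le> n" using i by simp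
  have W: "W21_loc (\<lambda>y. v i y - v (i - 1) y) (\<lambda>y. v' i y - v' (i - 1) y) (\<lambda>y. v'' i y - v'' (i - 1) y)"
    using W21[OF i(2)] W21[OF i'] by (rule W21_loc_diff)
  have M: "0 \<le> \<Delta> * deriv_bound / r"
    using cbar_pos n_pos deriv_bound_ge_one r_pos by (intro divide_nonneg_pos mult_nonneg_nonneg) auto
  show ?thesis
  proof (rule W21_loc_maximum_principle_Ici[OF W, where s = "\<sigma>^2 / 2" and C = "\<mu> + cbar"
        and E = "\<Delta> * deriv_bound" and B = v_max])
    show "0 < \<sigma>^2 / 2" "0 < r" "0 \<le> \<mu> + cbar" "\<Delta> * deriv_bound \<le> r * (\<Delta> * deriv_bound / r)" "0 \<le> x"
      using sigma_pos r_pos mu_pos cbar_pos \<open>0 \<le> x\<close> by auto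
    show "v i 0 - v (i - 1) 0 \<le> \<Delta> * deriv_bound / r" using v_zero[OF i(2)] v_zero[OF i'] M by simp
    show "\<forall>y\<ge>0. v i y - v (i - 1) y \<le> v_max"
    proof (intro allI impI)
      fix y :: real assume "0 \<le> y"
      then show "v i y - v (i - 1) y \<le> v_max" using v_le_v_max[OF i(2)] v_nonneg[OF i'] by fastforce
    qed
    show "AE y in lborel. 0 < y \<and> \<Delta> * deriv_bound / r < v i y - v (i - 1) y \<longrightarrow>
        r * (v i y - v (i - 1) y) - (\<mu> + cbar) * \<bar>v' i y - v' (i - 1) y\<bar> - \<Delta> * deriv_bound
          \<le> \<sigma>^2 / 2 * (v'' i y - v'' (i - 1) y)"
      using difference_supersolution_AE[OF i]
    proof eventually_elim
      case (elim y)
      show ?case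
      proof
        assume y: "0 < y \<and> \<Delta> * deriv_bound / r < v i y - v (i - 1) y"
        then have "v (i - 1) y < v i y" using M by linarith
        with elim y show "r * (v i y - v (i - 1) y) - (\<mu> + cbar) * \<bar>v' i y - v' (i - 1) y\<bar> - \<Delta> * deriv_bound
            \<le> \<sigma>^2 / 2 * (v'' i y - v'' (i - 1) y)" by blast
      qed
    qed
  qed
qed

end

lemma regime_solution_imp_regime_system:
  assumes "regime_params \<mu> \<sigma> r cbar b" and "1 \<le> n" and sol: "regime_solution \<mu> \<sigma> r cbar b n v"
  shows "\<exists>v' v''. regime_system \<mu> \<sigma> r cbar b n v v' v''"
proof -
  define admissible where "admissible i w \<longleftrightarrow> W2loc_all (v i) (fst w) (snd w) \<and>
     (AE x in lborel. x > 0 \<longrightarrow>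
        min (- opL \<mu> \<sigma> r (v i x) (fst w x) (snd w x) - (cbar - real i * (cbar / real n)) * opT b (fst w x))
            (v i x - (if i = 0 then 0 else v (i - 1) x)) = 0)" for i w
  have "\<exists>w. i \<le> n \<longrightarrow> admissible i w" for i
  proof (cases "i \<le> n")
    case True
    then obtain p q where "admissible i (p, q)"
      using sol unfolding regime_solution_def admissible_def by auto
    then show ?thesis by blast
  qed simp
  then obtain w where w: "\<And>i. i \<le> n \<Longrightarrow> admissible i (w i)"
    using choice[of "\<lambda>i w. i \<le> n \<longrightarrow> admissible i w"] by blast
  have "regime_system \<mu> \<sigma> r cbar b n v (\<lambda>i. fst (w i)) (\<lambda>i. snd (w i))"
  proof (intro regime_system.intro regime_system_axioms.intro)
    show "regime_params \<mu> \<sigma> r cbar b" "1 \<le> n" by fact+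
    fix i assume i: "i \<le> n"
    show "\<exists>B. \<forall>x\<ge>0. \<bar>v i x\<bar> \<le> B" "v i 0 = 0" using sol i unfolding regime_solution_def by blast+
    show "W21_loc (v i) (fst (w i)) (snd (w i))"
      using w[OF i] W2loc_all_imp_W21_loc unfolding admissible_def by blast
    show "AE x in lborel. x > 0 \<longrightarrow> min (- opL \<mu> \<sigma> r (v i x) (fst (w i) x) (snd (w i) x)
        - (cbar - real i * (cbar / real n)) * opT b (fst (w i) x)) (v i x - (if i = 0 then 0 else v (i - 1) x)) = 0"
      using w[OF i] unfolding admissible_def by blast
  qed
  then show ?thesis by blast
qed

theorem lemma5p10:
  fixes \<mu> \<sigma> r cbar b :: real
  assumes "\<sigma> > 0" and "r > 0" and "0 < cbar" and "cbar \<le> \<mu>" and "0 \<le> b" and "b \<le> 1"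
    and "2 * \<mu> * cbar > \<sigma>^2 * r"
  shows "\<exists>K>0. \<forall>n::nat. \<forall>v. n \<ge> 1 \<longrightarrow> regime_solution \<mu> \<sigma> r cbar b n v \<longrightarrow>
           (\<forall>i\<in>{1..n}. \<forall>x\<ge>0.
              0 \<le> (v i x - v (i - 1) x) / (cbar / real n) \<and>
              (v i x - v (i - 1) x) / (cbar / real n) \<le> K)"
proof -
  interpret regime_params \<mu> \<sigma> r cbar b using assms(1-6) by unfold_locales
  have K: "0 < deriv_bound / r" using deriv_bound_ge_one r_pos by simp
  show ?thesis
  proof (intro exI[of _ "deriv_bound / r"] conjI K allI impI ballI)
    fix n v i and x :: real
    assume "1 \<le> n" "regime_solution \<mu> \<sigma> r cbar b n v" "i \<in> {1..n}" "0 \<le> x"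
    then obtain v' v'' where "regime_system \<mu> \<sigma> r cbar b n v v' v''"
      using regime_solution_imp_regime_system regime_params_axioms by blast
    then interpret regime_system \<mu> \<sigma> r cbar b n v v' v'' .
    have i: "1 \<le> i" "i \<le> n" using \<open>i \<in> {1..n}\<close> by auto
    have "0 \<le> v i x - v (i - 1) x" using obstacle_le[OF i(2) \<open>0 \<le> x\<close>] i(1) by simp
    then show "0 \<le> (v i x - v (i - 1) x) / \<Delta>" using Delta_pos by (rule divide_nonneg_pos)
    have "v i x - v (i - 1) x \<le> deriv_bound / r * \<Delta>"
      using increment_le[OF i \<open>0 \<le> x\<close>] by (simp add: field_simps)
    then show "(v i x - v (i - 1) x) / \<Delta> \<le> deriv_bound / r"
      by (simp only: pos_divide_le_eq[OF Delta_pos])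
  qed
qed

end
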